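(* Let $K$ be a local field whose residue field has size $q$. Every congruence class in $T_\infty(K)/I_q(K)$ has a unique $q$-simplified representative, and if $f\equiv g\bmod I_q(K)$ with $g$ $q$-simplified, then $|f\bmod I_q(K)|_{\mathrm{res}}=|g|$.
   Context: A local field is a field complete with respect to a nontrivial discrete nonarchimedean absolute value with finite residue field. $T_\infty(K)=K\langle X_1,X_2,\dots\rangle$ is the set of formal power series $f=\sum_i a_i\underline X^i$ in countably many indeterminates (indices $i$ ranging over finitely supported sequences of nonnegative integers, $\underline X^i$ the corresponding monomial) such that $a_i\to0$, i.e. for every $\varepsilon>0$ only finitely many $|a_i|\ge\varepsilon$; it is a $K$-algebra normed by $|f|=\sup_i|a_i|$. $I_q(K)$ is the closure of the ideal generated by all $X_j^q-X_j$. For a closed ideal $I$, $|f\bmod I|_{\mathrm{res}}=\inf_{h\in I}|f+h|$. A series is $q$-simplified if in each monomial with nonzero coefficient every exponent is at most $q-1$. *)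

theory Defs
  imports Complex_Main "HOL-Library.Poly_Mapping"
begin

definition residue_field :: "('a::field \<Rightarrow> real) \<Rightarrow> 'a set set" where
  "residue_field absv =
     {x. absv x \<le> 1} // {(x, y). absv x \<le> 1 \<and> absv y \<le> 1 \<and> absv (x - y) < 1}"

definition local_field :: "('a::field \<Rightarrow> real) \<Rightarrow> bool" where
  "local_field absv \<longleftrightarrow>
     (\<forall>x. absv x \<ge> 0) \<and> (\<forall>x. absv x = 0 \<longleftrightarrow> x = 0) \<and>
     (\<forall>x y. absv (x * y) = absv x * absv y) \<and>
     (\<forall>x y. absv (x + y) \<le> max (absv x) (absv y)) \<and>
     (\<exists>x. absv x \<noteq> 0 \<and> absv x \<noteq> 1) \<and>
     (\<exists>c. 0 < c \<and> c < 1 \<and> (\<forall>x. x \<noteq> 0 \<longrightarrow> (\<exists>n::int. absv x = c powi n))) \<and>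
     (\<forall>s::nat \<Rightarrow> 'a. (\<forall>e>0. \<exists>N. \<forall>m\<ge>N. \<forall>n\<ge>N. absv (s m - s n) < e) \<longrightarrow>
        (\<exists>L. \<forall>e>0. \<exists>N. \<forall>n\<ge>N. absv (s n - L) < e)) \<and>
     finite (residue_field absv)"

text \<open>Formal power series in countably many variables X_0, X_1, ...: functions from
  finitely supported exponent sequences (nat =>0 nat) to coefficients.\<close>

type_synonym 'a series = "(nat \<Rightarrow>\<^sub>0 nat) \<Rightarrow> 'a"

definition tate :: "('a::field \<Rightarrow> real) \<Rightarrow> 'a series set" where
  "tate absv = {f. \<forall>e>0. finite {i. absv (f i) \<ge> e}}"

definition snorm :: "('a::field \<Rightarrow> real) \<Rightarrow> 'a series \<Rightarrow> real" where
  "snorm absv f = (SUP i. absv (f i))"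

definition smult_series :: "'a::field series \<Rightarrow> 'a series \<Rightarrow> 'a series" where
  "smult_series f g = (\<lambda>k. \<Sum>p\<in>{p. fst p + snd p = k}. f (fst p) * g (snd p))"

definition sadd :: "'a::field series \<Rightarrow> 'a series \<Rightarrow> 'a series" where
  "sadd f g = (\<lambda>i. f i + g i)"

definition ssub :: "'a::field series \<Rightarrow> 'a series \<Rightarrow> 'a series" where
  "ssub f g = (\<lambda>i. f i - g i)"

definition Xpow :: "nat \<Rightarrow> nat \<Rightarrow> 'a::field series" where
  "Xpow j e = (\<lambda>k. if k = Poly_Mapping.single j e then 1 else 0)"

definition gen_ideal_q :: "('a::field \<Rightarrow> real) \<Rightarrow> nat \<Rightarrow> 'a series set" where
  "gen_ideal_q absv q =
     {f. \<exists>J h. finite J \<and> (\<forall>j\<in>J. h j \<in> tate absv) \<and>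
          f = (\<lambda>k. \<Sum>j\<in>J. smult_series (h j) (ssub (Xpow j q) (Xpow j 1)) k)}"

definition Iq :: "('a::field \<Rightarrow> real) \<Rightarrow> nat \<Rightarrow> 'a series set" where
  "Iq absv q = {f \<in> tate absv. \<forall>e>0. \<exists>g\<in>gen_ideal_q absv q. snorm absv (ssub f g) < e}"

definition res_norm :: "('a::field \<Rightarrow> real) \<Rightarrow> 'a series set \<Rightarrow> 'a series \<Rightarrow> real" where
  "res_norm absv I f = (INF h\<in>I. snorm absv (sadd f h))"

definition q_simplified :: "nat \<Rightarrow> 'a::zero series \<Rightarrow> bool" where
  "q_simplified q g \<longleftrightarrow> (\<forall>i. g i \<noteq> 0 \<longrightarrow> (\<forall>j. Poly_Mapping.lookup i j \<le> q - 1))"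

end

(*
  Modulo the relations X_j^q = X_j every monomial X^i is congruent to X^(r i), where r reduces
  each positive exponent into {1, ..., q - 1} modulo q - 1.  For a monomial k, the fibre sum
  u |-> (sum of u_i over r i = k) is a linear functional bounded by the sup norm which kills every
  X^m (X_j^q - X_j), hence all of I_q, and which returns d_k on a q-simplified d.  Applied to
  d + h with d q-simplified and h in I_q it gives |d_k| <= |d + h|.  Taking for d the difference
  of two representatives and d + h = 0 gives uniqueness; taking d = g and the infimum over h
  gives the residue norm.  For existence, the fibre sums of f converge by completeness, since the
  coefficients of f tend to 0; they are the coefficients of a q-simplified g, and f - g is the
  limit of the finite sums of f_i (X^i - X^(r i)), which lie in the ideal.
*)

theory Submission
  imports Defs
begin

section \<open>Nonarchimedean absolute values\<close>

locale nonarch_absv =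
  fixes absv :: "'a::field \<Rightarrow> real"
  assumes absv_nonneg [simp]: "0 \<le> absv x"
    and absv_eq_0_iff [simp]: "absv x = 0 \<longleftrightarrow> x = 0"
    and absv_mult: "absv (x * y) = absv x * absv y"
    and absv_add_le_max: "absv (x + y) \<le> max (absv x) (absv y)"

locale complete_nonarch_absv = nonarch_absv +
  assumes cauchy_converges:
    "\<forall>e>0. \<exists>N. \<forall>m\<ge>N. \<forall>n\<ge>N. absv ((s :: nat \<Rightarrow> 'a::field) m - s n) < e \<Longrightarrow>
     \<exists>L. \<forall>e>0. \<exists>N. \<forall>n\<ge>N. absv (s n - L) < e"

lemma local_field_imp_complete_nonarch_absv:
  "local_field absv \<Longrightarrow> complete_nonarch_absv absv"
  unfolding local_field_def by unfold_locales auto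

context nonarch_absv
begin

lemma absv_0 [simp]: "absv 0 = 0"
  by simp

lemma absv_1 [simp]: "absv 1 = 1"
  using absv_mult[of 1 1] by simp

lemma absv_minus [simp]: "absv (- x) = absv x"
proof -
  have "absv (- 1) * absv (- 1) = 1"
    using absv_mult[of "- 1" "- 1"] by simp
  then have "absv (- 1) = 1"
    using absv_nonneg[of "- 1"]
    by (metis linorder_neq_iff mult_less_cancel_left1 mult_less_cancel_left2 order_less_asym')
  then show ?thesis
    using absv_mult[of "- 1" x] by simp
qed

lemma absv_minus_commute: "absv (x - y) = absv (y - x)"
  using absv_minus[of "x - y"] by simp

lemma absv_add_less: "absv x < c \<Longrightarrow> absv y < c \<Longrightarrow> absv (x + y) < c"
  using absv_add_le_max[of x y] by linarith

lemma absv_diff_less: "absv x < c \<Longrightarrow> absv y < c \<Longrightarrow> absv (x - y) < c"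
  using absv_add_less[of x c "- y"] by simp

lemma absv_sum_le:
  assumes "\<And>i. i \<in> F \<Longrightarrow> absv (x i) \<le> c" and "0 \<le> c"
  shows "absv (sum x F) \<le> c"
  using assms(1)
proof (induction F rule: infinite_finite_induct)
  case (insert i F)
  then have "absv (x i) \<le> c" "absv (sum x F) \<le> c"
    by auto
  then show ?case
    using insert.hyps absv_add_le_max[of "x i" "sum x F"] by (metis sum.insert max.bounded_iff order_trans)
qed (use assms(2) in auto)

lemma absv_sum_less:
  assumes "\<And>i. i \<in> F \<Longrightarrow> absv (x i) < c" and "0 < c"
  shows "absv (sum x F) < c"
  using assms(1)
proof (induction F rule: infinite_finite_induct)
  case (insert i F)
  then have "absv (x i) < c" "absv (sum x F) < c"
    by auto
  then show ?case
    using insert.hyps absv_add_le_max[of "x i" "sum x F"] by (metis sum.insert max_less_iff_conj le_less_trans)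
qed (use assms(2) in auto)

lemma card_residue_field_ge_2:
  assumes "finite (residue_field absv)"
  shows "2 \<le> card (residue_field absv)"
proof -
  define R where "R = {(x, y). absv x \<le> 1 \<and> absv y \<le> 1 \<and> absv (x - y) < (1::real)}"
  have residue_field_eq: "residue_field absv = {x. absv x \<le> 1} // R"
    by (simp add: residue_field_def R_def)
  have "R `` {0} \<in> residue_field absv" "R `` {1} \<in> residue_field absv"
    unfolding residue_field_eq by (rule quotientI, simp)+
  moreover have "R `` {0} \<noteq> R `` {1}"
  proof -
    have "1 \<in> R `` {1}" "1 \<notin> R `` {0}"
      unfolding R_def by simp_all
    then show ?thesis
      by blast
  qed
  ultimately show ?thesis
    using card_mono[OF assms, of "{R `` {0}, R `` {1}}"] by simp
qed

end

lemma sadd_apply [simp]: "sadd f g i = f i + g i"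
  by (simp add: sadd_def)

lemma ssub_apply [simp]: "ssub f g i = f i - g i"
  by (simp add: ssub_def)

lemma snorm_least: "(\<And>i. absv (f i) \<le> c) \<Longrightarrow> snorm absv f \<le> c"
  unfolding snorm_def by (rule cSUP_least) auto

context nonarch_absv
begin

lemma tate_bdd_above:
  assumes "f \<in> tate absv"
  shows "bdd_above (range (\<lambda>i. absv (f i)))"
proof -
  have "finite {i. 1 \<le> absv (f i)}"
    using assms by (simp add: tate_def)
  moreover have "range (\<lambda>i. absv (f i)) \<subseteq> {..1} \<union> (\<lambda>i. absv (f i)) ` {i. 1 \<le> absv (f i)}"
    by auto
  ultimately show ?thesis
    by (meson bdd_above_Iic bdd_above_Un bdd_above_finite bdd_above_mono finite_imageI)
qed

lemma snorm_upper: "f \<in> tate absv \<Longrightarrow> absv (f i) \<le> snorm absv f"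
  unfolding snorm_def by (rule cSUP_upper) (auto intro: tate_bdd_above)

lemma tate_finite_support: "finite {i. f i \<noteq> 0} \<Longrightarrow> f \<in> tate absv"
  unfolding tate_def by (auto elim!: rev_finite_subset)

lemma tate_add:
  assumes "f \<in> tate absv" "g \<in> tate absv"
  shows "(\<lambda>i. f i + g i) \<in> tate absv"
  unfolding tate_def
proof safe
  fix e :: real
  assume "0 < e"
  have "{i. e \<le> absv (f i + g i)} \<subseteq> {i. e \<le> absv (f i)} \<union> {i. e \<le> absv (g i)}"
    using order_trans[OF _ absv_add_le_max] by (fastforce simp: le_max_iff_disj)
  moreover have "finite ({i. e \<le> absv (f i)} \<union> {i. e \<le> absv (g i)})"
    using assms \<open>0 < e\<close> by (simp add: tate_def)
  ultimately show "finite {i. e \<le> absv (f i + g i)}"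
    by (rule finite_subset)
qed

lemma tate_scale:
  assumes "f \<in> tate absv"
  shows "(\<lambda>i. c * f i) \<in> tate absv"
  unfolding tate_def
proof safe
  fix e :: real
  assume "0 < e"
  show "finite {i. e \<le> absv (c * f i)}"
  proof (cases "c = 0")
    case False
    then have c_pos: "0 < absv c"
      using absv_nonneg[of c] by (simp add: less_le)
    then have "{i. e \<le> absv (c * f i)} = {i. e / absv c \<le> absv (f i)}"
      by (auto simp: absv_mult field_simps)
    then show ?thesis
      using assms \<open>0 < e\<close> c_pos by (simp add: tate_def)
  qed (use \<open>0 < e\<close> in simp)
qed

lemma tate_diff: "f \<in> tate absv \<Longrightarrow> g \<in> tate absv \<Longrightarrow> ssub f g \<in> tate absv"
  using tate_add[of f "\<lambda>i. - 1 * g i"] tate_scale[of g "- 1"] by (simp add: ssub_def)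

lemma tate_sum:
  "finite J \<Longrightarrow> (\<And>j. j \<in> J \<Longrightarrow> h j \<in> tate absv) \<Longrightarrow> (\<lambda>i. \<Sum>j\<in>J. h j i) \<in> tate absv"
proof (induction J rule: finite_induct)
  case empty
  then show ?case
    by (simp add: tate_finite_support)
next
  case (insert j J)
  then show ?case
    using tate_add[of "h j" "\<lambda>i. \<Sum>j\<in>J. h j i"] by simp
qed

end

definition monom_series :: "(nat \<Rightarrow>\<^sub>0 nat) \<Rightarrow> 'a::field series" where
  "monom_series m = (\<lambda>k. if k = m then 1 else 0)"

lemma Xpow_eq_monom_series: "Xpow j e = monom_series (Poly_Mapping.single j e)"
  by (simp add: Xpow_def monom_series_def)

lemma finite_lookup_le: "finite {a :: 'b \<Rightarrow>\<^sub>0 nat. \<forall>x. Poly_Mapping.lookup a x \<le> Poly_Mapping.lookup k x}"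
  (is "finite ?D")
proof -
  let ?K = "Poly_Mapping.keys k"
  let ?B = "\<Union>x\<in>?K. {..Poly_Mapping.lookup k x}"
  have "Poly_Mapping.lookup ` ?D \<subseteq> {f. \<forall>x. (x \<in> ?K \<longrightarrow> f x \<in> ?B) \<and> (x \<notin> ?K \<longrightarrow> f x = 0)}"
  proof (intro subsetI CollectI allI conjI impI)
    fix f x
    assume "f \<in> Poly_Mapping.lookup ` ?D"
    then obtain a where "f = Poly_Mapping.lookup a" "\<forall>x. Poly_Mapping.lookup a x \<le> Poly_Mapping.lookup k x"
      by blast
    then show "x \<in> ?K \<Longrightarrow> f x \<in> ?B" "x \<notin> ?K \<Longrightarrow> f x = 0"
      by (auto simp: Poly_Mapping.in_keys_iff) (metis le_zero_eq)
  qed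
  moreover have "finite {f. \<forall>x. (x \<in> ?K \<longrightarrow> f x \<in> ?B) \<and> (x \<notin> ?K \<longrightarrow> f x = (0::nat))}"
    by (intro finite_set_of_finite_funs) simp_all
  ultimately have "finite (Poly_Mapping.lookup ` ?D)"
    by (rule finite_subset)
  then show ?thesis
    by (rule finite_imageD) (simp add: inj_on_def poly_mapping_eqI)
qed

lemma finite_decompositions: "finite {p :: ('b \<Rightarrow>\<^sub>0 nat) \<times> ('b \<Rightarrow>\<^sub>0 nat). fst p + snd p = k}"
proof -
  let ?D = "{a :: 'b \<Rightarrow>\<^sub>0 nat. \<forall>x. Poly_Mapping.lookup a x \<le> Poly_Mapping.lookup k x}"
  have "{p. fst p + snd p = k} \<subseteq> ?D \<times> ?D"
    by (auto simp: Poly_Mapping.lookup_add)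
  then show ?thesis
    by (rule finite_subset) (intro finite_cartesian_product finite_lookup_le)
qed

lemma add_right_eq_subset: "{m :: 'b \<Rightarrow>\<^sub>0 nat. m + s = k} \<subseteq> {k - s}"
  by (auto simp: add_diff_cancel_right')

lemma finite_add_right_eq: "finite {m :: 'b \<Rightarrow>\<^sub>0 nat. m + s = k}"
  using add_right_eq_subset by (rule finite_subset) simp

lemma smult_series_monom_series:
  "smult_series h (monom_series s) k = sum h {m. m + s = k}"
proof -
  let ?S = "{p. fst p + snd p = k}"
  have "smult_series h (monom_series s) k = (\<Sum>p\<in>?S. if snd p = s then h (fst p) else 0)"
    unfolding smult_series_def monom_series_def by (intro sum.cong) auto
  also have "\<dots> = (\<Sum>p\<in>{p \<in> ?S. snd p = s}. h (fst p))"
    by (rule sum.inter_filter[symmetric, OF finite_decompositions])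
  also have "{p \<in> ?S. snd p = s} = (\<lambda>m. (m, s)) ` {m. m + s = k}"
    by auto
  also have "(\<Sum>p\<in>(\<lambda>m. (m, s)) ` {m. m + s = k}. h (fst p)) = sum h {m. m + s = k}"
    by (subst sum.reindex) (auto intro: inj_onI)
  finally show ?thesis .
qed

lemma smult_series_diff_right:
  "smult_series h (ssub f g) k = smult_series h f k - smult_series h g k"
  unfolding smult_series_def by (simp add: sum_subtractf algebra_simps)

lemma smult_series_add_left:
  "smult_series (\<lambda>i. f i + g i) Z k = smult_series f Z k + smult_series g Z k"
  unfolding smult_series_def by (simp add: sum.distrib algebra_simps)

lemma smult_series_zero_left [simp]: "smult_series (\<lambda>i. 0) Z k = 0"
  unfolding smult_series_def by simp

lemma smult_series_diff_left:
  "smult_series (\<lambda>i. f i - g i) Z k = smult_series f Z k - smult_series g Z k"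
  unfolding smult_series_def by (simp add: sum_subtractf algebra_simps)

lemma smult_series_scale_left:
  "smult_series (\<lambda>i. c * f i) Z k = c * smult_series f Z k"
  unfolding smult_series_def by (simp add: sum_distrib_left algebra_simps)

section \<open>Reduction of exponents\<close>

(* Since X^q = X, an exponent e >= 1 can be lowered by q - 1, but never down to 0. *)
definition reduce_exp :: "nat \<Rightarrow> nat \<Rightarrow> nat" where
  "reduce_exp q e = (if e = 0 then 0 else (e - 1) mod (q - 1) + 1)"

definition reduce_monomial :: "nat \<Rightarrow> ('b \<Rightarrow>\<^sub>0 nat) \<Rightarrow> ('b \<Rightarrow>\<^sub>0 nat)" where
  "reduce_monomial q i = Poly_Mapping.map (reduce_exp q) i"

definition simplified_monomial :: "nat \<Rightarrow> ('b \<Rightarrow>\<^sub>0 nat) \<Rightarrow> bool" where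
  "simplified_monomial q i \<longleftrightarrow> (\<forall>j. Poly_Mapping.lookup i j \<le> q - 1)"

lemma q_simplified_iff: "q_simplified q g \<longleftrightarrow> (\<forall>i. g i \<noteq> 0 \<longrightarrow> simplified_monomial q i)"
  by (simp add: q_simplified_def simplified_monomial_def)

lemma q_simplified_diff:
  assumes "q_simplified q g" "q_simplified q g'"
  shows "q_simplified q (ssub g g')"
  unfolding q_simplified_iff
proof safe
  fix i
  assume "ssub g g' i \<noteq> 0"
  then have "g i \<noteq> 0 \<or> g' i \<noteq> 0"
    by auto
  then show "simplified_monomial q i"
    using assms unfolding q_simplified_iff by blast
qed

lemma reduce_exp_le:
  assumes "2 \<le> q"
  shows "reduce_exp q e \<le> q - 1"
proof -
  have "(e - 1) mod (q - 1) < q - 1"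
    using assms by simp
  then show ?thesis
    unfolding reduce_exp_def by auto
qed

lemma reduce_exp_eq_self: "e \<le> q - 1 \<Longrightarrow> reduce_exp q e = e"
  by (auto simp: reduce_exp_def)

lemma reduce_exp_add_q:
  assumes "0 < q"
  shows "reduce_exp q (e + q) = reduce_exp q (e + 1)"
proof -
  have "e + q - 1 = e + (q - 1)"
    using assms by simp
  then have "(e + q - 1) mod (q - 1) = e mod (q - 1)"
    by simp
  then show ?thesis
    using assms by (simp add: reduce_exp_def)
qed

lemma lookup_reduce_monomial:
  "Poly_Mapping.lookup (reduce_monomial q i) j = reduce_exp q (Poly_Mapping.lookup i j)"
  by (simp add: reduce_monomial_def Poly_Mapping.map.rep_eq when_def reduce_exp_def)

lemma simplified_reduce_monomial: "2 \<le> q \<Longrightarrow> simplified_monomial q (reduce_monomial q i)"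
  unfolding simplified_monomial_def lookup_reduce_monomial by (blast intro: reduce_exp_le)

lemma reduce_monomial_eq_self: "simplified_monomial q i \<Longrightarrow> reduce_monomial q i = i"
  by (rule poly_mapping_eqI) (simp add: lookup_reduce_monomial simplified_monomial_def reduce_exp_eq_self)

lemma reduce_monomial_add_single_q:
  "0 < q \<Longrightarrow> reduce_monomial q (m + Poly_Mapping.single j q) = reduce_monomial q (m + Poly_Mapping.single j 1)"
  by (rule poly_mapping_eqI)
    (simp add: lookup_reduce_monomial Poly_Mapping.lookup_add Poly_Mapping.lookup_single when_def reduce_exp_add_q)

lemma Sum_any_lookup_add_single:
  "Sum_any (Poly_Mapping.lookup (m + Poly_Mapping.single j e)) = Sum_any (Poly_Mapping.lookup m) + e"
proof -
  have "finite {x. (e when j = x) \<noteq> 0}"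
    by (simp add: when_def)
  then show ?thesis
    by (simp add: Poly_Mapping.lookup_add Poly_Mapping.lookup_single Sum_any.distrib)
qed

lemma smult_series_monom_series_monom_series:
  "smult_series (monom_series m) (monom_series s) = monom_series (m + s)"
proof
  fix k
  have "m \<in> {m'. m' + s = k} \<longleftrightarrow> k = m + s"
    by auto
  then show "smult_series (monom_series m) (monom_series s) k = monom_series (m + s) k"
    unfolding smult_series_monom_series by (simp add: monom_series_def finite_add_right_eq)
qed

lemma smult_series_generator:
  "smult_series h (ssub (Xpow j q) (Xpow j 1)) k =
     sum h {m. m + Poly_Mapping.single j q = k} - sum h {m. m + Poly_Mapping.single j 1 = k}"
  by (simp add: smult_series_diff_right Xpow_eq_monom_series smult_series_monom_series)

context nonarch_absv
begin

lemma gen_ideal_qI: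
  assumes "finite J" "\<And>j. j \<in> J \<Longrightarrow> h j \<in> tate absv"
  shows "(\<lambda>k. \<Sum>j\<in>J. smult_series (h j) (ssub (Xpow j q) (Xpow j 1)) k) \<in> gen_ideal_q absv q"
  unfolding gen_ideal_q_def using assms by (intro CollectI exI[of _ J] exI[of _ h]) simp

lemma tate_smult_monom_series:
  assumes "h \<in> tate absv"
  shows "smult_series h (monom_series s) \<in> tate absv"
  unfolding tate_def
proof safe
  fix e :: real
  assume "0 < e"
  have "{k. e \<le> absv (smult_series h (monom_series s) k)} \<subseteq> (\<lambda>m. m + s) ` {m. e \<le> absv (h m)}"
  proof
    fix k
    assume k: "k \<in> {k. e \<le> absv (smult_series h (monom_series s) k)}"
    have "{m. m + s = k} = {} \<or> {m. m + s = k} = {k - s}"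
      using add_right_eq_subset[of s k] by (simp only: subset_singleton_iff)
    then show "k \<in> (\<lambda>m. m + s) ` {m. e \<le> absv (h m)}"
      using k \<open>0 < e\<close> by (auto simp: smult_series_monom_series)
  qed
  moreover have "finite {m. e \<le> absv (h m)}"
    using assms \<open>0 < e\<close> by (simp add: tate_def)
  ultimately show "finite {k. e \<le> absv (smult_series h (monom_series s) k)}"
    by (meson finite_imageI finite_subset)
qed

lemma gen_ideal_q_subset_tate: "gen_ideal_q absv q \<subseteq> tate absv"
proof
  fix u
  assume "u \<in> gen_ideal_q absv q"
  then obtain J h where J: "finite J" "\<forall>j\<in>J. h j \<in> tate absv"
    and u: "u = (\<lambda>k. \<Sum>j\<in>J. smult_series (h j) (ssub (Xpow j q) (Xpow j 1)) k)"
    unfolding gen_ideal_q_def by blast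
  have "smult_series (h j) (ssub (Xpow j q) (Xpow j 1)) \<in> tate absv" if "j \<in> J" for j
  proof -
    have "smult_series (h j) (ssub (Xpow j q) (Xpow j 1)) =
        ssub (smult_series (h j) (monom_series (Poly_Mapping.single j q)))
          (smult_series (h j) (monom_series (Poly_Mapping.single j 1)))"
      by (simp add: fun_eq_iff smult_series_diff_right Xpow_eq_monom_series)
    then show ?thesis
      using J(2) that by (simp only: tate_diff tate_smult_monom_series)
  qed
  then show "u \<in> tate absv"
    unfolding u using tate_sum[OF J(1), of "\<lambda>j. smult_series (h j) (ssub (Xpow j q) (Xpow j 1))"]
    by simp
qed

lemma gen_ideal_q_add:
  assumes "f \<in> gen_ideal_q absv q" "g \<in> gen_ideal_q absv q"
  shows "(\<lambda>k. f k + g k) \<in> gen_ideal_q absv q"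
proof -
  let ?Z = "\<lambda>j. ssub (Xpow j q) (Xpow j 1)"
  obtain J1 h1 where J1: "finite J1" "\<forall>j\<in>J1. h1 j \<in> tate absv"
    and f: "f = (\<lambda>k. \<Sum>j\<in>J1. smult_series (h1 j) (?Z j) k)"
    using assms(1) unfolding gen_ideal_q_def by blast
  obtain J2 h2 where J2: "finite J2" "\<forall>j\<in>J2. h2 j \<in> tate absv"
    and g: "g = (\<lambda>k. \<Sum>j\<in>J2. smult_series (h2 j) (?Z j) k)"
    using assms(2) unfolding gen_ideal_q_def by blast
  define h where
    "h j = sadd (if j \<in> J1 then h1 j else (\<lambda>_. 0)) (if j \<in> J2 then h2 j else (\<lambda>_. 0))" for j
  have "h j \<in> tate absv" for j
    unfolding h_def sadd_def using J1 J2
    by (intro tate_add) (auto simp: tate_finite_support)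
  moreover have "f k + g k = (\<Sum>j\<in>J1 \<union> J2. smult_series (h j) (?Z j) k)" for k
  proof -
    have "(\<Sum>j\<in>J1 \<union> J2. smult_series (h j) (?Z j) k) =
        (\<Sum>j\<in>J1 \<union> J2. if j \<in> J1 then smult_series (h1 j) (?Z j) k else 0) +
        (\<Sum>j\<in>J1 \<union> J2. if j \<in> J2 then smult_series (h2 j) (?Z j) k else 0)"
      unfolding h_def sadd_def smult_series_add_left sum.distrib[symmetric]
      by (intro sum.cong) auto
    also have "\<dots> = f k + g k"
      unfolding f g using J1(1) J2(1)
      by (simp add: sum.inter_restrict[symmetric] Int_absorb1)
    finally show ?thesis ..
  qed
  ultimately show ?thesis
    using gen_ideal_qI[of "J1 \<union> J2" h] J1(1) J2(1) by simp
qed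

lemma gen_ideal_q_scale:
  assumes "f \<in> gen_ideal_q absv q"
  shows "(\<lambda>k. c * f k) \<in> gen_ideal_q absv q"
proof -
  obtain J h where J: "finite J" "\<forall>j\<in>J. h j \<in> tate absv"
    and f: "f = (\<lambda>k. \<Sum>j\<in>J. smult_series (h j) (ssub (Xpow j q) (Xpow j 1)) k)"
    using assms unfolding gen_ideal_q_def by blast
  have "(\<lambda>k. c * f k) = (\<lambda>k. \<Sum>j\<in>J. smult_series (\<lambda>i. c * h j i) (ssub (Xpow j q) (Xpow j 1)) k)"
    unfolding f smult_series_scale_left sum_distrib_left ..
  moreover have "(\<lambda>i. c * h j i) \<in> tate absv" if "j \<in> J" for j
    using J(2) that by (simp add: tate_scale)
  ultimately show ?thesis
    using gen_ideal_qI[OF J(1)] by simp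
qed

lemma gen_ideal_q_zero: "(\<lambda>k. 0) \<in> gen_ideal_q absv q"
  using gen_ideal_qI[of "{}"] by simp

lemma gen_ideal_q_sum:
  "finite A \<Longrightarrow> (\<And>a. a \<in> A \<Longrightarrow> F a \<in> gen_ideal_q absv q) \<Longrightarrow>
    (\<lambda>k. \<Sum>a\<in>A. F a k) \<in> gen_ideal_q absv q"
proof (induction A rule: finite_induct)
  case empty
  then show ?case
    by (simp add: gen_ideal_q_zero)
next
  case (insert a A)
  then show ?case
    using gen_ideal_q_add[where f = "F a" and g = "\<lambda>k. \<Sum>a\<in>A. F a k"] by simp
qed

lemma ssub_monom_series_in_gen_ideal_q:
  "ssub (monom_series (m + Poly_Mapping.single j q)) (monom_series (m + Poly_Mapping.single j 1))
     \<in> gen_ideal_q absv q"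
proof -
  have "(\<lambda>k. \<Sum>j'\<in>{j}. smult_series (monom_series m) (ssub (Xpow j' q) (Xpow j' 1)) k)
      \<in> gen_ideal_q absv q"
    by (rule gen_ideal_qI) (simp_all add: tate_finite_support monom_series_def)
  moreover have "(\<lambda>k. \<Sum>j'\<in>{j}. smult_series (monom_series m :: 'a series) (ssub (Xpow j' q) (Xpow j' 1)) k) =
      ssub (monom_series (m + Poly_Mapping.single j q)) (monom_series (m + Poly_Mapping.single j 1))"
    by (simp add: fun_eq_iff smult_series_diff_right Xpow_eq_monom_series
        smult_series_monom_series_monom_series)
  ultimately show ?thesis
    by (simp only:)
qed

lemma ssub_monom_series_reduce_in_gen_ideal_q:
  assumes "2 \<le> q"
  shows "ssub (monom_series i) (monom_series (reduce_monomial q i)) \<in> gen_ideal_q absv q"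
proof (induction i rule: measure_induct_rule[where f = "\<lambda>i. Sum_any (Poly_Mapping.lookup i)"])
  case (less i)
  show ?case
  proof (cases "simplified_monomial q i")
    case True
    then show ?thesis
      using gen_ideal_q_zero by (simp add: reduce_monomial_eq_self ssub_def)
  next
    case False
    then obtain j where "q - 1 < Poly_Mapping.lookup i j"
      unfolding simplified_monomial_def by (auto simp: not_le)
    then have j: "q \<le> Poly_Mapping.lookup i j"
      by simp
    define m where "m = i - Poly_Mapping.single j q"
    have i: "i = m + Poly_Mapping.single j q"
      using j by (intro poly_mapping_eqI)
        (auto simp: m_def Poly_Mapping.lookup_add Poly_Mapping.lookup_minus Poly_Mapping.lookup_single when_def)
    define i' where "i' = m + Poly_Mapping.single j 1"
    have "Sum_any (Poly_Mapping.lookup i') < Sum_any (Poly_Mapping.lookup i)"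
      using assms by (simp add: i i'_def Sum_any_lookup_add_single)
    then have "ssub (monom_series i') (monom_series (reduce_monomial q i')) \<in> gen_ideal_q absv q"
      by (rule less.IH)
    moreover have "reduce_monomial q i' = reduce_monomial q i"
      using assms by (simp add: i i'_def reduce_monomial_add_single_q)
    ultimately have reduce_i': "ssub (monom_series i') (monom_series (reduce_monomial q i)) \<in> gen_ideal_q absv q"
      by simp
    have "ssub (monom_series i) (monom_series i') \<in> gen_ideal_q absv q"
      unfolding i i'_def by (rule ssub_monom_series_in_gen_ideal_q)
    from gen_ideal_q_add[OF this reduce_i'] show ?thesis
      by (simp add: ssub_def)
  qed
qed

end

section \<open>Fibre sums over the reduction map\<close>

definition fibre_sum ::
    "nat \<Rightarrow> (nat \<Rightarrow>\<^sub>0 nat) set \<Rightarrow> 'a::comm_monoid_add series \<Rightarrow> (nat \<Rightarrow>\<^sub>0 nat) \<Rightarrow> 'a" where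
  "fibre_sum q A u k = (\<Sum>i\<in>{i\<in>A. reduce_monomial q i = k}. u i)"

lemma fibre_sum_add: "fibre_sum q A (\<lambda>i. u i + v i) k = fibre_sum q A u k + fibre_sum q A v k"
  by (simp add: fibre_sum_def sum.distrib)

lemma fibre_sum_diff:
  "fibre_sum q A (\<lambda>i. u i - v i) k = fibre_sum q A u k - (fibre_sum q A v k :: 'a::ab_group_add)"
  by (simp add: fibre_sum_def sum_subtractf)

lemma fibre_sum_minus: "fibre_sum q A (\<lambda>i. - u i) k = - (fibre_sum q A u k :: 'a::ab_group_add)"
  by (simp add: fibre_sum_def sum_negf)

lemma fibre_sum_sum: "fibre_sum q A (\<lambda>i. \<Sum>j\<in>J. u j i) k = (\<Sum>j\<in>J. fibre_sum q A (u j) k)"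
  unfolding fibre_sum_def by (rule sum.swap)

lemma fibre_sum_shift:
  assumes "finite A" "finite H" "\<And>m. m \<notin> H \<Longrightarrow> t m = 0" "(\<lambda>m. m + s) ` H \<subseteq> A"
  shows "fibre_sum q A (\<lambda>i. sum t {m. m + s = i}) k =
    (\<Sum>m\<in>{m\<in>H. reduce_monomial q (m + s) = k}. t m)"
proof -
  let ?F = "{i\<in>A. reduce_monomial q i = k}"
  have "sum t {m. m + s = i} = (\<Sum>m\<in>{m. m \<in> H \<and> m + s = i}. t m)" for i
    using assms(3) by (intro sum.mono_neutral_right) (auto simp: finite_add_right_eq)
  then have "fibre_sum q A (\<lambda>i. sum t {m. m + s = i}) k = (\<Sum>i\<in>?F. \<Sum>m\<in>{m. m \<in> H \<and> m + s = i}. t m)"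
    by (simp add: fibre_sum_def)
  also have "\<dots> = (\<Sum>m\<in>H. \<Sum>i\<in>{i. i \<in> ?F \<and> m + s = i}. t m)"
    using assms(1,2) by (intro sum.swap_restrict) auto
  also have "\<dots> = (\<Sum>m\<in>H. if reduce_monomial q (m + s) = k then t m else 0)"
  proof (intro sum.cong refl)
    fix m
    assume "m \<in> H"
    then have "{i. i \<in> ?F \<and> m + s = i} = (if reduce_monomial q (m + s) = k then {m + s} else {})"
      using assms(4) by auto
    then show "(\<Sum>i\<in>{i. i \<in> ?F \<and> m + s = i}. t m) = (if reduce_monomial q (m + s) = k then t m else 0)"
      by simp
  qed
  also have "\<dots> = (\<Sum>m\<in>{m\<in>H. reduce_monomial q (m + s) = k}. t m)"
    using assms(2) by (simp add: sum.inter_filter)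
  finally show ?thesis .
qed

lemma fibre_sum_smult_generator:
  assumes "0 < q" "finite A" "finite H" "\<And>m. m \<notin> H \<Longrightarrow> t m = 0"
    and "(\<lambda>m. m + Poly_Mapping.single j q) ` H \<subseteq> A" "(\<lambda>m. m + Poly_Mapping.single j 1) ` H \<subseteq> A"
  shows "fibre_sum q A (smult_series t (ssub (Xpow j q) (Xpow j 1))) k = 0"
proof -
  have "smult_series t (ssub (Xpow j q) (Xpow j 1)) =
      (\<lambda>i. sum t {m. m + Poly_Mapping.single j q = i} - sum t {m. m + Poly_Mapping.single j 1 = i})"
    by (rule ext) (rule smult_series_generator)
  then show ?thesis
    using assms by (simp add: fibre_sum_diff fibre_sum_shift reduce_monomial_add_single_q)
qed

lemma fibre_sum_q_simplified:
  assumes "q_simplified q d" "finite A"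
  shows "fibre_sum q A d k = (if k \<in> A then d k else 0)"
proof -
  have d: "reduce_monomial q i = i" if "d i \<noteq> 0" for i
    using assms that by (simp add: q_simplified_iff reduce_monomial_eq_self)
  have "fibre_sum q A d k = (\<Sum>i\<in>{i\<in>A. reduce_monomial q i = k}. if i = k then d k else 0)"
    unfolding fibre_sum_def
  proof (intro sum.cong refl)
    fix i
    assume "i \<in> {i\<in>A. reduce_monomial q i = k}"
    then show "d i = (if i = k then d k else 0)"
      using d[of i] by (cases "d i = 0") auto
  qed
  also have "\<dots> = (if k \<in> A then d k else 0)"
    using assms(2) d[of k] by auto
  finally show ?thesis .
qed

(* The fibres of reduce_monomial are infinite, so the vanishing of the fibre sums is phrased as
   convergence to 0 along the finite subsets A of the index set. *)
definition fibre_sums_zero :: "('a::field \<Rightarrow> real) \<Rightarrow> nat \<Rightarrow> 'a series \<Rightarrow> bool" where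
  "fibre_sums_zero absv q u \<longleftrightarrow>
     (\<forall>k c. 0 < c \<longrightarrow> eventually (\<lambda>A. absv (fibre_sum q A u k) < c) (finite_subsets_at_top UNIV))"

context nonarch_absv
begin

lemma fibre_sums_zero_add:
  assumes "fibre_sums_zero absv q u" "fibre_sums_zero absv q v"
  shows "fibre_sums_zero absv q (\<lambda>i. u i + v i)"
  unfolding fibre_sums_zero_def
proof (intro allI impI)
  fix k and c :: real
  assume "0 < c"
  then have "eventually (\<lambda>A. absv (fibre_sum q A u k) < c) (finite_subsets_at_top UNIV)"
    "eventually (\<lambda>A. absv (fibre_sum q A v k) < c) (finite_subsets_at_top UNIV)"
    using assms by (simp_all add: fibre_sums_zero_def)
  then show "eventually (\<lambda>A. absv (fibre_sum q A (\<lambda>i. u i + v i) k) < c) (finite_subsets_at_top UNIV)"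
    by eventually_elim (simp add: fibre_sum_add absv_add_less)
qed

lemma fibre_sums_zero_minus:
  "fibre_sums_zero absv q u \<Longrightarrow> fibre_sums_zero absv q (\<lambda>i. - u i)"
  by (simp add: fibre_sums_zero_def fibre_sum_minus)

lemma fibre_sums_zero_approx:
  assumes "\<And>c. 0 < c \<Longrightarrow> \<exists>v. fibre_sums_zero absv q v \<and> (\<forall>i. absv (u i - v i) < c)"
  shows "fibre_sums_zero absv q u"
  unfolding fibre_sums_zero_def
proof (intro allI impI)
  fix k and c :: real
  assume "0 < c"
  then obtain v where v: "fibre_sums_zero absv q v" "\<And>i. absv (u i - v i) < c"
    using assms by blast
  have "eventually (\<lambda>A. absv (fibre_sum q A v k) < c) (finite_subsets_at_top UNIV)"
    using v(1) \<open>0 < c\<close> by (simp add: fibre_sums_zero_def)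
  then show "eventually (\<lambda>A. absv (fibre_sum q A u k) < c) (finite_subsets_at_top UNIV)"
  proof eventually_elim
    case (elim A)
    have "absv (fibre_sum q A (\<lambda>i. u i - v i) k) < c"
      unfolding fibre_sum_def using v(2) \<open>0 < c\<close> by (rule absv_sum_less)
    from absv_add_less[OF this elim] show ?case
      by (simp add: fibre_sum_diff)
  qed
qed

lemma fibre_sums_zero_smult_generator_sum:
  assumes "0 < q" "finite J" "\<And>j. j \<in> J \<Longrightarrow> finite {m. t j m \<noteq> 0}"
  shows "fibre_sums_zero absv q (\<lambda>k. \<Sum>j\<in>J. smult_series (t j) (ssub (Xpow j q) (Xpow j 1)) k)"
proof -
  define A0 where "A0 = (\<Union>j\<in>J. (\<lambda>m. m + Poly_Mapping.single j q) ` {m. t j m \<noteq> 0} \<union>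
      (\<lambda>m. m + Poly_Mapping.single j 1) ` {m. t j m \<noteq> 0})"
  have "finite A0"
    using assms(2,3) by (simp add: A0_def)
  moreover have "fibre_sum q A (\<lambda>k. \<Sum>j\<in>J. smult_series (t j) (ssub (Xpow j q) (Xpow j 1)) k) k = 0"
    if "finite A" "A0 \<subseteq> A" for A k
    unfolding fibre_sum_sum
  proof (intro sum.neutral ballI)
    fix j
    assume "j \<in> J"
    then have "(\<lambda>m. m + Poly_Mapping.single j q) ` {m. t j m \<noteq> 0} \<subseteq> A"
      "(\<lambda>m. m + Poly_Mapping.single j 1) ` {m. t j m \<noteq> 0} \<subseteq> A"
      using that(2) unfolding A0_def by blast+
    then show "fibre_sum q A (smult_series (t j) (ssub (Xpow j q) (Xpow j 1))) k = 0"
      using assms(1,3) \<open>j \<in> J\<close> \<open>finite A\<close>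
      by (intro fibre_sum_smult_generator[where H = "{m. t j m \<noteq> 0}"]) auto
  qed
  ultimately show ?thesis
    unfolding fibre_sums_zero_def eventually_finite_subsets_at_top by auto
qed

lemma absv_smult_generator_less:
  assumes "\<And>m. absv (r m) < c" "0 < c"
  shows "absv (smult_series r (ssub (Xpow j q) (Xpow j 1)) k) < c"
  unfolding smult_series_generator using assms by (intro absv_diff_less absv_sum_less)

lemma gen_ideal_q_fibre_sums_zero:
  assumes "0 < q" "u \<in> gen_ideal_q absv q"
  shows "fibre_sums_zero absv q u"
proof (rule fibre_sums_zero_approx)
  fix c :: real
  assume "0 < c"
  obtain J h where J: "finite J" "\<forall>j\<in>J. h j \<in> tate absv"
    and u: "u = (\<lambda>k. \<Sum>j\<in>J. smult_series (h j) (ssub (Xpow j q) (Xpow j 1)) k)"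
    using assms(2) unfolding gen_ideal_q_def by blast
  (* Keep the finitely many cofactor coefficients of size at least c: the truncated combination
     has exactly vanishing fibre sums, and the discarded part has norm below c. *)
  define t where "t j m = (if c \<le> absv (h j m) then h j m else 0)" for j m
  have "finite {m. t j m \<noteq> 0}" if "j \<in> J" for j
  proof (rule finite_subset)
    show "{m. t j m \<noteq> 0} \<subseteq> {m. c \<le> absv (h j m)}"
      by (auto simp: t_def)
    show "finite {m. c \<le> absv (h j m)}"
      using J(2) that \<open>0 < c\<close> by (simp add: tate_def)
  qed
  then have "fibre_sums_zero absv q (\<lambda>k. \<Sum>j\<in>J. smult_series (t j) (ssub (Xpow j q) (Xpow j 1)) k)"
    by (rule fibre_sums_zero_smult_generator_sum[OF assms(1) J(1)])
  moreover have "absv (u k - (\<Sum>j\<in>J. smult_series (t j) (ssub (Xpow j q) (Xpow j 1)) k)) < c" for k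
  proof -
    have "absv (h j m - t j m) < c" for j m
      using \<open>0 < c\<close> by (simp add: t_def)
    then have "absv (\<Sum>j\<in>J. smult_series (\<lambda>m. h j m - t j m) (ssub (Xpow j q) (Xpow j 1)) k) < c"
      using \<open>0 < c\<close> by (intro absv_sum_less absv_smult_generator_less)
    then show ?thesis
      by (simp add: u smult_series_diff_left sum_subtractf)
  qed
  ultimately show "\<exists>v. fibre_sums_zero absv q v \<and> (\<forall>i. absv (u i - v i) < c)"
    by blast
qed

lemma Iq_fibre_sums_zero:
  assumes "0 < q" "u \<in> Iq absv q"
  shows "fibre_sums_zero absv q u"
proof (rule fibre_sums_zero_approx)
  fix c :: real
  assume "0 < c"
  then obtain G where G: "G \<in> gen_ideal_q absv q" "snorm absv (ssub u G) < c"
    using assms(2) unfolding Iq_def by blast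
  have "ssub u G \<in> tate absv"
    using assms(2) G(1) gen_ideal_q_subset_tate by (auto simp: Iq_def intro: tate_diff)
  then have "absv (u i - G i) < c" for i
    using snorm_upper[of "ssub u G" i] G(2) by simp
  then show "\<exists>v. fibre_sums_zero absv q v \<and> (\<forall>i. absv (u i - v i) < c)"
    using gen_ideal_q_fibre_sums_zero[OF assms(1) G(1)] by blast
qed

lemma q_simplified_coeff_le:
  assumes "q_simplified q d" "fibre_sums_zero absv q u" "\<And>i. absv (d i + u i) \<le> B"
  shows "absv (d k) \<le> B"
proof (rule ccontr)
  assume B_less: "\<not> absv (d k) \<le> B"
  have "0 \<le> B"
    using assms(3)[of k] absv_nonneg[of "d k + u k"] by linarith
  then have "0 < absv (d k)"
    using B_less by linarith
  then have "eventually (\<lambda>A. absv (fibre_sum q A u k) < absv (d k)) (finite_subsets_at_top UNIV)"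
    using assms(2) unfolding fibre_sums_zero_def by blast
  then obtain A0 where "finite A0"
    and A0: "\<forall>A. finite A \<and> A0 \<subseteq> A \<and> A \<subseteq> UNIV \<longrightarrow> absv (fibre_sum q A u k) < absv (d k)"
    unfolding eventually_finite_subsets_at_top by blast
  define A where "A = insert k A0"
  have "finite A"
    using \<open>finite A0\<close> by (simp add: A_def)
  have "absv (fibre_sum q A (\<lambda>i. d i + u i) k) \<le> B"
    unfolding fibre_sum_def using assms(3) \<open>0 \<le> B\<close> by (rule absv_sum_le)
  then have "absv (fibre_sum q A (\<lambda>i. d i + u i) k) < absv (d k)"
    using B_less by linarith
  moreover have "absv (fibre_sum q A u k) < absv (d k)"
    using A0 \<open>finite A\<close> by (auto simp: A_def)
  ultimately have "absv (fibre_sum q A (\<lambda>i. d i + u i) k - fibre_sum q A u k) < absv (d k)"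
    by (rule absv_diff_less)
  moreover have "fibre_sum q A (\<lambda>i. d i + u i) k - fibre_sum q A u k = d k"
    using fibre_sum_q_simplified[OF assms(1) \<open>finite A\<close>] by (simp add: fibre_sum_add A_def)
  ultimately show False
    by simp
qed

section \<open>Uniqueness and the residue norm\<close>

lemma Iq_minus:
  assumes "u \<in> Iq absv q"
  shows "(\<lambda>i. - u i) \<in> Iq absv q"
  unfolding Iq_def
proof (intro CollectI conjI allI impI)
  show "(\<lambda>i. - u i) \<in> tate absv"
    using assms tate_scale[of u "- 1"] by (simp add: Iq_def)
  fix e :: real
  assume "0 < e"
  then obtain G where G: "G \<in> gen_ideal_q absv q" "snorm absv (ssub u G) < e"
    using assms unfolding Iq_def by blast
  have "snorm absv (ssub (\<lambda>i. - u i) (\<lambda>k. - 1 * G k)) = snorm absv (ssub u G)"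
    unfolding snorm_def by (simp add: absv_minus_commute)
  then show "\<exists>G\<in>gen_ideal_q absv q. snorm absv (ssub (\<lambda>i. - u i) G) < e"
    using gen_ideal_q_scale[OF G(1), of "- 1"] G(2) by metis
qed

lemma q_simplified_representative_unique:
  assumes "0 < q" "q_simplified q g" "q_simplified q g'"
    and "ssub f g \<in> Iq absv q" "ssub f g' \<in> Iq absv q"
  shows "g = g'"
proof
  fix k
  have "q_simplified q (ssub g g')"
    using assms(2,3) by (rule q_simplified_diff)
  moreover have "fibre_sums_zero absv q (\<lambda>i. ssub f g i + - ssub f g' i)"
    using assms by (intro fibre_sums_zero_add fibre_sums_zero_minus Iq_fibre_sums_zero)
  ultimately have "absv (ssub g g' k) \<le> 0"
    by (rule q_simplified_coeff_le) simp
  then show "g k = g' k"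
    using absv_nonneg[of "g k - g' k"] by simp
qed

lemma res_norm_q_simplified:
  assumes "0 < q" "g \<in> tate absv" "q_simplified q g" "ssub f g \<in> Iq absv q"
  shows "res_norm absv (Iq absv q) f = snorm absv g"
  unfolding res_norm_def
proof (rule cInf_eq_minimum)
  have "sadd f (\<lambda>i. - ssub f g i) = g"
    by (simp add: sadd_def)
  then show "snorm absv g \<in> (\<lambda>h. snorm absv (sadd f h)) ` Iq absv q"
    using Iq_minus[OF assms(4)] by (metis image_eqI)
next
  fix x
  assume "x \<in> (\<lambda>h. snorm absv (sadd f h)) ` Iq absv q"
  then obtain h where h: "h \<in> Iq absv q" and x: "x = snorm absv (sadd f h)"
    by blast
  have "ssub f g \<in> tate absv"
    using assms(4) by (simp add: Iq_def)
  from tate_add[OF this assms(2)] have "f \<in> tate absv"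
    by simp
  then have "sadd f h \<in> tate absv"
    using h unfolding sadd_def Iq_def by (intro tate_add) simp_all
  have "fibre_sums_zero absv q (\<lambda>i. ssub f g i + h i)"
    using assms(1,4) h by (intro fibre_sums_zero_add Iq_fibre_sums_zero)
  moreover have "absv (g i + (ssub f g i + h i)) \<le> x" for i
    using snorm_upper[OF \<open>sadd f h \<in> tate absv\<close>, of i] by (simp add: x add_diff_eq)
  ultimately have "absv (g k) \<le> x" for k
    by (rule q_simplified_coeff_le[OF assms(3)])
  then show "snorm absv g \<le> x"
    by (rule snorm_least)
qed

section \<open>Existence of \<open>q\<close>-simplified representatives\<close>

lemma Iq_memberI:
  assumes "u \<in> tate absv" "\<And>c. 0 < c \<Longrightarrow> \<exists>G\<in>gen_ideal_q absv q. \<forall>i. absv (u i - G i) \<le> c"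
  shows "u \<in> Iq absv q"
  unfolding Iq_def
proof (intro CollectI conjI allI impI assms(1))
  fix e :: real
  assume "0 < e"
  then obtain G where G: "G \<in> gen_ideal_q absv q" "\<And>i. absv (u i - G i) \<le> e / 2"
    using assms(2)[of "e / 2"] by auto
  then have "snorm absv (ssub u G) \<le> e / 2"
    by (intro snorm_least) simp
  then show "\<exists>G\<in>gen_ideal_q absv q. snorm absv (ssub u G) < e"
    using G(1) \<open>0 < e\<close> by (intro bexI[of _ G]) auto
qed

lemma truncation_minus_fibre_sum_in_gen_ideal_q:
  assumes "2 \<le> q" "finite T"
  shows "(\<lambda>k. (if k \<in> T then f k else 0) - fibre_sum q T f k) \<in> gen_ideal_q absv q"
proof -
  have "(\<lambda>k. \<Sum>i\<in>T. f i * ssub (monom_series i) (monom_series (reduce_monomial q i)) k)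
      \<in> gen_ideal_q absv q"
    using assms by (intro gen_ideal_q_sum gen_ideal_q_scale ssub_monom_series_reduce_in_gen_ideal_q)
  moreover have "(\<Sum>i\<in>T. f i * ssub (monom_series i) (monom_series (reduce_monomial q i)) k) =
      (if k \<in> T then f k else 0) - fibre_sum q T f k" for k
  proof -
    have "(\<Sum>i\<in>T. f i * monom_series i k) = (\<Sum>i\<in>T. if k = i then f i else 0)"
      by (intro sum.cong) (simp_all add: monom_series_def)
    also have "\<dots> = (if k \<in> T then f k else 0)"
      using assms(2) by simp
    finally have restrict: "(\<Sum>i\<in>T. f i * monom_series i k) = (if k \<in> T then f k else 0)" .
    have "(\<Sum>i\<in>T. f i * monom_series (reduce_monomial q i) k) =
        (\<Sum>i\<in>T. if reduce_monomial q i = k then f i else 0)"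
      by (intro sum.cong) (auto simp: monom_series_def)
    also have "\<dots> = fibre_sum q T f k"
      unfolding fibre_sum_def using assms(2) by (simp add: sum.inter_filter)
    finally show ?thesis
      using restrict by (simp add: right_diff_distrib sum_subtractf)
  qed
  ultimately show ?thesis
    by simp
qed

lemma absv_fibre_sum_diff_less:
  assumes "finite A'" "A \<subseteq> A'" "\<And>i. i \<in> A' - A \<Longrightarrow> absv (f i) < c" "0 < c"
  shows "absv (fibre_sum q A' f k - fibre_sum q A f k) < c"
proof -
  have "{i\<in>A. reduce_monomial q i = k} \<subseteq> {i\<in>A'. reduce_monomial q i = k}"
    using assms(2) by auto
  then have "fibre_sum q A' f k - fibre_sum q A f k =
      (\<Sum>i\<in>{i\<in>A'. reduce_monomial q i = k} - {i\<in>A. reduce_monomial q i = k}. f i)"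
    unfolding fibre_sum_def using assms(1) by (simp add: sum.subset_diff)
  also have "absv \<dots> < c"
    using assms(3,4) by (intro absv_sum_less) auto
  finally show ?thesis .
qed

end

definition large_coeffs :: "('a::field \<Rightarrow> real) \<Rightarrow> 'a series \<Rightarrow> nat \<Rightarrow> (nat \<Rightarrow>\<^sub>0 nat) set" where
  "large_coeffs absv f n = {i. inverse (real (Suc n)) \<le> absv (f i)}"

definition fibre_sum_limit :: "('a::field \<Rightarrow> real) \<Rightarrow> nat \<Rightarrow> 'a series \<Rightarrow> 'a series \<Rightarrow> bool" where
  "fibre_sum_limit absv q f g \<longleftrightarrow>
     (\<forall>k n. absv (g k - fibre_sum q (large_coeffs absv f n) f k) < inverse (real (Suc n)))"

context nonarch_absv
begin

lemma finite_large_coeffs: "f \<in> tate absv \<Longrightarrow> finite (large_coeffs absv f n)"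
  by (simp add: large_coeffs_def tate_def)

lemma large_coeffs_mono:
  assumes "n \<le> m"
  shows "large_coeffs absv f n \<subseteq> large_coeffs absv f m"
proof -
  have inverse_le: "inverse (real (Suc m)) \<le> inverse (real (Suc n))"
    using assms by (simp add: le_imp_inverse_le)
  show ?thesis
    unfolding large_coeffs_def using order_trans[OF inverse_le] by blast
qed

lemma fibre_sum_large_coeffs_cauchy:
  assumes "f \<in> tate absv" "n \<le> m"
  shows "absv (fibre_sum q (large_coeffs absv f m) f k - fibre_sum q (large_coeffs absv f n) f k)
    < inverse (real (Suc n))"
  using finite_large_coeffs[OF assms(1)] large_coeffs_mono[OF assms(2)]
  by (rule absv_fibre_sum_diff_less) (auto simp: large_coeffs_def)

lemma fibre_sum_limit_small:
  assumes "fibre_sum_limit absv q f g" "k \<notin> reduce_monomial q ` large_coeffs absv f n"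
  shows "absv (g k) < inverse (real (Suc n))"
proof -
  have "fibre_sum q (large_coeffs absv f n) f k = 0"
    using assms(2) by (auto simp: fibre_sum_def intro: sum.neutral)
  then show ?thesis
    using assms(1) unfolding fibre_sum_limit_def by (metis diff_zero)
qed

lemma fibre_sum_limit_in_tate:
  assumes "f \<in> tate absv" "fibre_sum_limit absv q f g"
  shows "g \<in> tate absv"
  unfolding tate_def
proof safe
  fix e :: real
  assume "0 < e"
  then obtain n where n: "inverse (real (Suc n)) < e"
    using reals_Archimedean by blast
  have "{k. e \<le> absv (g k)} \<subseteq> reduce_monomial q ` large_coeffs absv f n"
  proof
    fix k
    assume "k \<in> {k. e \<le> absv (g k)}"
    then show "k \<in> reduce_monomial q ` large_coeffs absv f n"
      using fibre_sum_limit_small[OF assms(2), of k n] n by (auto simp: not_less)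
  qed
  then show "finite {k. e \<le> absv (g k)}"
    by (rule finite_subset) (simp add: finite_large_coeffs assms(1))
qed

lemma fibre_sum_limit_q_simplified:
  assumes "2 \<le> q" "fibre_sum_limit absv q f g"
  shows "q_simplified q g"
  unfolding q_simplified_iff
proof safe
  fix k
  assume "g k \<noteq> 0"
  then obtain n where "inverse (real (Suc n)) < absv (g k)"
    using reals_Archimedean[of "absv (g k)"] absv_nonneg[of "g k"] by (auto simp: less_le)
  then have "k \<in> reduce_monomial q ` large_coeffs absv f n"
    using fibre_sum_limit_small[OF assms(2), of k n] by (auto simp: not_less)
  then show "simplified_monomial q k"
    using simplified_reduce_monomial[OF assms(1)] by blast
qed

lemma diff_fibre_sum_limit_in_Iq:
  assumes "2 \<le> q" "f \<in> tate absv" "g \<in> tate absv" "fibre_sum_limit absv q f g"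
  shows "ssub f g \<in> Iq absv q"
proof (rule Iq_memberI)
  show "ssub f g \<in> tate absv"
    using assms(2,3) by (rule tate_diff)
  fix c :: real
  assume "0 < c"
  then obtain n where n: "inverse (real (Suc n)) < c"
    using reals_Archimedean by blast
  let ?T = "large_coeffs absv f n"
  define G where "G k = (if k \<in> ?T then f k else 0) - fibre_sum q ?T f k" for k
  have "absv ((f k - (if k \<in> ?T then f k else 0)) - (g k - fibre_sum q ?T f k)) < inverse (real (Suc n))"
    for k
    using assms(4) by (intro absv_diff_less[of _ _ "g k - _"])
      (auto simp: fibre_sum_limit_def large_coeffs_def not_le)
  then have "absv (ssub f g k - G k) < inverse (real (Suc n))" for k
    by (simp add: G_def algebra_simps)
  then have "\<forall>k. absv (ssub f g k - G k) \<le> c"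
    using n by (meson less_imp_le less_trans)
  moreover have "G \<in> gen_ideal_q absv q"
    unfolding G_def using assms(1) finite_large_coeffs[OF assms(2)]
    by (rule truncation_minus_fibre_sum_in_gen_ideal_q)
  ultimately show "\<exists>G\<in>gen_ideal_q absv q. \<forall>k. absv (ssub f g k - G k) \<le> c"
    by blast
qed

end

context complete_nonarch_absv
begin

lemma ultrametric_cauchy_limit:
  assumes "\<And>n m. n \<le> m \<Longrightarrow> absv (s m - s n) < inverse (real (Suc n))"
  shows "\<exists>L. \<forall>n. absv (L - s n) < inverse (real (Suc n))"
proof -
  have "\<exists>L. \<forall>e>0. \<exists>N. \<forall>n\<ge>N. absv (s n - L) < e"
  proof (rule cauchy_converges, intro allI impI)
    fix e :: real
    assume "0 < e"
    then obtain N where N: "inverse (real (Suc N)) < e"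
      using reals_Archimedean by blast
    have "absv (s m - s n) < e" if "N \<le> m" "N \<le> n" for m n
    proof -
      have "absv (s m - s n) < inverse (real (Suc (min m n)))"
        using assms[of n m] assms[of m n] by (cases "n \<le> m") (simp_all add: absv_minus_commute)
      also have "\<dots> \<le> inverse (real (Suc N))"
        using that by (simp add: le_imp_inverse_le)
      finally show ?thesis
        using N by linarith
    qed
    then show "\<exists>N. \<forall>m\<ge>N. \<forall>n\<ge>N. absv (s m - s n) < e"
      by blast
  qed
  then obtain L where L: "\<forall>e>0. \<exists>N. \<forall>n\<ge>N. absv (s n - L) < e"
    by blast
  have "absv (L - s n) < inverse (real (Suc n))" for n
  proof -
    obtain N where "\<forall>m\<ge>N. absv (s m - L) < inverse (real (Suc n))"
      using L by (meson inverse_positive_iff_positive of_nat_0_less_iff zero_less_Suc)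
    then have "absv (s (max N n) - L) < inverse (real (Suc n))"
      by simp
    moreover have "absv (s (max N n) - s n) < inverse (real (Suc n))"
      using assms[of n "max N n"] by simp
    ultimately have "absv ((s (max N n) - s n) - (s (max N n) - L)) < inverse (real (Suc n))"
      by (rule absv_diff_less[rotated])
    then show ?thesis
      by simp
  qed
  then show ?thesis
    by blast
qed

lemma fibre_sum_limit_exists:
  assumes "f \<in> tate absv"
  shows "\<exists>g. fibre_sum_limit absv q f g"
proof -
  have "\<forall>k. \<exists>L. \<forall>n. absv (L - fibre_sum q (large_coeffs absv f n) f k) < inverse (real (Suc n))"
    using fibre_sum_large_coeffs_cauchy[OF assms] by (intro allI ultrametric_cauchy_limit)
  from choice[OF this] show ?thesis
    unfolding fibre_sum_limit_def by blast
qed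

lemma exists_q_simplified_representative:
  assumes "2 \<le> q" "f \<in> tate absv"
  shows "\<exists>g\<in>tate absv. q_simplified q g \<and> ssub f g \<in> Iq absv q"
proof -
  obtain g where g: "fibre_sum_limit absv q f g"
    using fibre_sum_limit_exists[OF assms(2)] by blast
  have "g \<in> tate absv"
    using assms(2) g by (rule fibre_sum_limit_in_tate)
  then show ?thesis
    using assms g fibre_sum_limit_q_simplified diff_fibre_sum_limit_in_Iq by blast
qed

end

theorem lemma6p1:
  fixes absv :: "'a::field \<Rightarrow> real" and q :: nat
  assumes "local_field absv"
    and "q = card (residue_field absv)"
  shows "(\<forall>f\<in>tate absv. \<exists>!g. g \<in> tate absv \<and> q_simplified q g \<and> ssub f g \<in> Iq absv q) \<and>
         (\<forall>f g. f \<in> tate absv \<longrightarrow> g \<in> tate absv \<longrightarrow> q_simplified q g \<longrightarrow>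
             ssub f g \<in> Iq absv q \<longrightarrow> res_norm absv (Iq absv q) f = snorm absv g)"
proof -
  interpret complete_nonarch_absv absv
    using assms(1) by (rule local_field_imp_complete_nonarch_absv)
  have q: "2 \<le> q"
    using assms card_residue_field_ge_2 by (simp add: local_field_def)
  then have "0 < q"
    by simp
  have "\<exists>!g. g \<in> tate absv \<and> q_simplified q g \<and> ssub f g \<in> Iq absv q" if "f \<in> tate absv" for f
    using exists_q_simplified_representative[OF q that] q_simplified_representative_unique[OF \<open>0 < q\<close>]
    by (intro ex_ex1I) auto
  moreover have "res_norm absv (Iq absv q) f = snorm absv g"
    if "g \<in> tate absv" "q_simplified q g" "ssub f g \<in> Iq absv q" for f g
    using res_norm_q_simplified[of q g f] q that by simp
  ultimately show ?thesis
    by blast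
qed

end
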